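(* Fix $\vartheta\in\mathbb{C}$, let $r_1,r_2$ be the two roots (listed with multiplicity) of $\vartheta-(\mathtt{h}+1)^2$, let $\omega=3+\max(\mathrm{Re}\, r_1,\mathrm{Re}\, r_2)$ and $\mathbb{C}_\omega=\{z\in\mathbb{C}: \mathrm{Re}\,z\in[\omega,\omega+2)\}$. Let $u=c\prod_{t\in\mathbb{C}_\omega}(\mathtt{h}-t)^{\mathtt{m}(t)}$ with $c\in\mathbb{C}^\times$ and $\mathtt{m}:\mathbb{C}_\omega\to\mathbb{Z}$ of finite support. Then the module $L_u$ is finitely generated over $\mathbb{C}[\mathtt{h}]$ if and only if, for every $s\in\mathbb{C}_\omega$, we have $0\leq\mathtt{m}(s)\leq|\{j\in\{1,2\}: r_j\in s-2\mathbb{Z}_{>0}\}|$.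
   Context: $\mathfrak{g}=\mathfrak{sl}_2(\mathbb{C})$ with basis $\mathtt{e},\mathtt{f},\mathtt{h}$, $[\mathtt{h},\mathtt{e}]=2\mathtt{e}$, $[\mathtt{h},\mathtt{f}]=-2\mathtt{f}$, $[\mathtt{e},\mathtt{f}]=\mathtt{h}$; Casimir element $\mathtt{c}=(\mathtt{h}+1)^2+4\mathtt{f}\mathtt{e}$; $U_\vartheta=U(\mathfrak{g})/U(\mathfrak{g})(\mathtt{c}-\vartheta)$. Let $\Bbbk=\mathbb{C}(\mathtt{h})$, $\sigma$ the automorphism of $\Bbbk$ fixing $\mathbb{C}$ with $\sigma(\mathtt{h})=\mathtt{h}-2$, and $R=\Bbbk[x,x^{-1},\sigma]$ (skew Laurent polynomials: $xr=\sigma(r)x$ for $r\in\Bbbk$). The assignment $\mathtt{e}\mapsto x$, $\mathtt{f}\mapsto\frac{\vartheta-(\mathtt{h}+1)^2}{4}x^{-1}$, $\mathtt{h}\mapsto\mathtt{h}$ gives an injective algebra homomorphism $U_\vartheta\to R$. $N_u$ is $\Bbbk$ with the $R$-module structure where $\Bbbk$ acts by multiplication and $x\cdot b=\sigma(b)u$; as a $U_\vartheta$-module, $\mathtt{h}$ acts by multiplication, $\mathtt{e}\cdot b=\sigma(b)u$ and $\mathtt{f}\cdot b=\frac{\vartheta-(\mathtt{h}+1)^2}{4}\cdot\frac{\sigma^{-1}(b)}{\sigma^{-1}(u)}$. It is known that $N_u$, viewed as a $U_\vartheta$-module, has a unique simple submodule; this is denoted $L_u$; it is a $\mathbb{C}[\mathtt{h}]$-module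 via the action of $\mathtt{h}$. *)

theory Defs
  imports Complex_Main "HOL-Computational_Algebra.Polynomial" "HOL-Computational_Algebra.Fraction_Field"
begin

text \<open>The field k = C(h) is modelled as the fraction field of complex polynomials;
  the polynomial variable is h.\<close>

type_synonym ratfun = "complex poly fract"

definition hvar :: ratfun where "hvar = Fract [:0, 1:] 1"

definition cst :: "complex \<Rightarrow> ratfun" where "cst c = Fract [:c:] 1"

definition poly_fr :: "complex poly \<Rightarrow> ratfun" where "poly_fr p = Fract p 1"

lift_definition shift_fr :: "complex \<Rightarrow> ratfun \<Rightarrow> ratfun"
  is "\<lambda>a q. (pcompose (fst q) [:a, 1:], pcompose (snd q) [:a, 1:])"
proof -
  fix a :: complex and x y :: "complex poly \<times> complex poly"
  assume "fractrel x y"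
  then have h: "snd x \<noteq> 0" "snd y \<noteq> 0" "fst x * snd y = fst y * snd x" by auto
  have nz: "pcompose p [:a, 1:] \<noteq> 0" if "p \<noteq> 0" for p :: "complex poly"
    using that pcompose_eq_0[of p "[:a, 1:]"] by fastforce
  have "pcompose (fst x) [:a, 1:] * pcompose (snd y) [:a, 1:]
        = pcompose (fst y) [:a, 1:] * pcompose (snd x) [:a, 1:]"
    using h(3) by (metis pcompose_mult)
  then show "fractrel (pcompose (fst x) [:a, 1:], pcompose (snd x) [:a, 1:])
                      (pcompose (fst y) [:a, 1:], pcompose (snd y) [:a, 1:])"
    using h nz by simp
qed

definition sigma :: "ratfun \<Rightarrow> ratfun" where "sigma = shift_fr (-2)"
definition sigma_inv :: "ratfun \<Rightarrow> ratfun" where "sigma_inv = shift_fr 2"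

text \<open>The U_theta-action on N_u (underlying space k).\<close>
definition act_h :: "ratfun \<Rightarrow> ratfun" where "act_h b = hvar * b"
definition act_e :: "ratfun \<Rightarrow> ratfun \<Rightarrow> ratfun" where "act_e u b = sigma b * u"
definition act_f :: "complex \<Rightarrow> ratfun \<Rightarrow> ratfun \<Rightarrow> ratfun" where
  "act_f \<theta> u b = ((cst \<theta> - (hvar + 1)^2) / 4) * (sigma_inv b / sigma_inv u)"

text \<open>U_theta-submodules of N_u: C-subspaces of k stable under e, f, h
  (U_theta is generated by e, f, h as an algebra).\<close>
definition is_submod :: "complex \<Rightarrow> ratfun \<Rightarrow> ratfun set \<Rightarrow> bool" where
  "is_submod \<theta> u M \<longleftrightarrow>
     0 \<in> M \<and> (\<forall>a\<in>M. \<forall>b\<in>M. a + b \<in> M) \<and> (\<forall>c. \<forall>a\<in>M. cst c * a \<in> M)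
     \<and> (\<forall>a\<in>M. act_h a \<in> M) \<and> (\<forall>a\<in>M. act_e u a \<in> M) \<and> (\<forall>a\<in>M. act_f \<theta> u a \<in> M)"

definition is_simple_submod :: "complex \<Rightarrow> ratfun \<Rightarrow> ratfun set \<Rightarrow> bool" where
  "is_simple_submod \<theta> u M \<longleftrightarrow> is_submod \<theta> u M \<and> M \<noteq> {0} \<and>
     (\<forall>M'. is_submod \<theta> u M' \<and> M' \<subseteq> M \<longrightarrow> M' = {0} \<or> M' = M)"

text \<open>L_u: the unique simple U_theta-submodule of N_u.\<close>
definition L_mod :: "complex \<Rightarrow> ratfun \<Rightarrow> ratfun set" where
  "L_mod \<theta> u = (THE M. is_simple_submod \<theta> u M)"

definition fin_gen_Ch :: "ratfun set \<Rightarrow> bool" where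
  "fin_gen_Ch M \<longleftrightarrow> (\<exists>S. finite S \<and> S \<subseteq> M \<and>
      M = {\<Sum>s\<in>S. poly_fr (p s) * s | p. True})"

end

theory Submission
  imports Defs "HOL-Computational_Algebra.Fundamental_Theorem_Algebra"
begin

(* Measure a rational function in h by its orders of vanishing val t at the points t of C.
   The operator e shifts orders by 2 and adds the exponents m of u; f shifts them back,
   adds the roots r1, r2 of theta - (h + 1)^2 and subtracts m. Iterating e (resp. f) on any
   nonzero vector therefore reaches, at a given t, the order m_below t (resp.
   roots_in (t + 2N) - m_above t). Since an ideal of C[h] without common zeros is all of
   C[h], every nonzero submodule contains the space of all x with val t x >= ord_bound t,
   the minimum of these two numbers, for every t. That space is itself a submodule, so it
   is L_u; and being cut out by orders, it is finitely generated over C[h] iff ord_bound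
   has finite support. As m lives in the strip C_omega to the right of the roots,
   ord_bound is negative on all of s + 2N if m s < 0, and otherwise it can only be negative
   on the ladders s - 2N_{>0} below points s of the support, far down which it equals
   min 0 (#{j. r_j in s - 2N_{>0}} - m s). *)

(* The value at 0 is junk. *)
lift_definition val :: "'a::idom \<Rightarrow> 'a poly fract \<Rightarrow> int"
  is "\<lambda>t q. if fst q = 0 then 0 else int (order t (fst q)) - int (order t (snd q))"
proof -
  fix t :: 'a and x y :: "'a poly \<times> 'a poly"
  assume "fractrel x y"
  then have nz: "snd x \<noteq> 0" "snd y \<noteq> 0" and eq: "fst x * snd y = fst y * snd x"
    by auto
  show "(if fst x = 0 then 0 else int (order t (fst x)) - int (order t (snd x))) =
        (if fst y = 0 then 0 else int (order t (fst y)) - int (order t (snd y)))"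
  proof (cases "fst x = 0")
    case False
    then have "fst y \<noteq> 0"
      using eq nz by auto
    moreover have "order t (fst x * snd y) = order t (fst y * snd x)"
      using eq by simp
    ultimately show ?thesis
      using False nz by (simp add: order_mult)
  qed (use eq nz in simp)
qed

lemma val_Fract: "a \<noteq> 0 \<Longrightarrow> b \<noteq> 0 \<Longrightarrow> val t (Fract a b) = int (order t a) - int (order t b)"
  by transfer simp

lemma Fract_eq_0_iff: "b \<noteq> 0 \<Longrightarrow> Fract a b = 0 \<longleftrightarrow> a = 0"
  by (simp add: Zero_fract_def eq_fract)

lemma val_0 [simp]: "val t 0 = 0"
  by transfer simp

lemma val_1 [simp]: "val t 1 = 0"
  by (simp add: One_fract_def val_Fract)

lemma val_mult: "x \<noteq> 0 \<Longrightarrow> y \<noteq> 0 \<Longrightarrow> val t (x * y) = val t x + val t y"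
  by (cases x rule: Fract_cases_nonzero; cases y rule: Fract_cases_nonzero)
     (simp_all add: val_Fract order_mult)

lemma val_inverse: "val t (inverse x) = - val t x"
  by (cases x rule: Fract_cases_nonzero) (simp_all add: val_Fract)

lemma val_divide: "x \<noteq> 0 \<Longrightarrow> y \<noteq> 0 \<Longrightarrow> val t (x / y) = val t x - val t y"
  by (simp add: divide_inverse val_mult val_inverse)

lemma val_uminus [simp]: "val t (- x) = val t x"
  by (cases x rule: Fract_cases_nonzero) (simp_all add: val_Fract)

lemma val_power: "x \<noteq> 0 \<Longrightarrow> val t (x ^ n) = int n * val t x"
  by (induction n) (simp_all add: val_mult algebra_simps)

lemma val_power_int: "x \<noteq> 0 \<Longrightarrow> val t (x powi n) = n * val t x"
  by (simp add: power_int_def val_power val_inverse)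

lemma val_prod:
  "finite S \<Longrightarrow> (\<And>s. s \<in> S \<Longrightarrow> f s \<noteq> 0) \<Longrightarrow> val t (prod f S) = (\<Sum>s\<in>S. val t (f s))"
  by (induction S rule: finite_induct) (simp_all add: val_mult)

lemma val_add_ge_min:
  assumes "x + y \<noteq> 0"
  shows "min (val t x) (val t y) \<le> val t (x + y)"
proof (cases "x = 0 \<or> y = 0")
  case False
  then obtain a b c d where x: "x = Fract a b" "a \<noteq> 0" "b \<noteq> 0"
    and y: "y = Fract c d" "c \<noteq> 0" "d \<noteq> 0"
    by (metis Fract_cases_nonzero)
  have nz: "a * d + c * b \<noteq> 0"
    using assms x y by (auto simp: Fract_eq_0_iff)
  define k where "k = min (order t a + order t d) (order t c + order t b)"
  have "[:-t, 1:] ^ k dvd a * d" "[:-t, 1:] ^ k dvd c * b"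
    unfolding k_def using x y by (simp_all add: order_divides order_mult)
  then have "[:-t, 1:] ^ k dvd a * d + c * b"
    by (rule dvd_add)
  then have "k \<le> order t (a * d + c * b)"
    using nz by (simp add: order_divides)
  then show ?thesis
    using x y nz unfolding k_def by (simp add: val_Fract order_mult)
qed auto

lemma numeral_fract_eq_Fract: "(numeral k :: 'a::idom fract) = Fract (numeral k) 1"
  by (metis of_nat_fract of_nat_numeral)

lemma numeral_fract_neq_0 [simp]: "(numeral k :: 'a::{idom, ring_char_0} poly fract) \<noteq> 0"
  by (subst numeral_fract_eq_Fract, subst Fract_eq_0_iff) simp_all

lemma val_numeral [simp]: "val t (numeral k :: 'a::{idom, ring_char_0} poly fract) = 0"
  by (subst numeral_fract_eq_Fract, subst val_Fract) (simp_all add: order_0I)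

lemma finite_val_support: "finite {t. val t x \<noteq> 0}"
proof (cases x rule: Fract_cases_nonzero)
  case (Fract a b)
  then have "{t. val t x \<noteq> 0} \<subseteq> {t. poly a t = 0} \<union> {t. poly b t = 0}"
    by (auto simp: val_Fract order_root)
  then show ?thesis
    using Fract poly_roots_finite[of a] poly_roots_finite[of b] finite_subset by blast
qed simp

lemma pcompose_power_left: "pcompose (p ^ n) q = pcompose p q ^ n"
  by (induction n) (simp_all add: pcompose_mult pcompose_1)

lemma order_pcompose_shift:
  fixes p :: "'a::idom poly"
  assumes "p \<noteq> 0"
  shows "order t (pcompose p [:a, 1:]) = order (t + a) p"
proof -
  define k where "k = order (t + a) p"
  obtain q where p: "p = [:-(t + a), 1:] ^ k * q" and "\<not> [:-(t + a), 1:] dvd q"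
    using order_decomp[OF assms] unfolding k_def by blast
  then have q: "poly (pcompose q [:a, 1:]) t \<noteq> 0"
    by (simp add: poly_pcompose poly_eq_0_iff_dvd add.commute)
  have "pcompose p [:a, 1:] = [:-t, 1:] ^ k * pcompose q [:a, 1:]"
    by (simp add: p pcompose_mult pcompose_power_left pcompose_pCons)
  moreover have "pcompose q [:a, 1:] \<noteq> 0"
    using q by auto
  ultimately show ?thesis
    using q by (simp add: order_mult order_power_n_n order_0I k_def)
qed

lemma shift_fr_Fract:
  assumes "q \<noteq> 0"
  shows "shift_fr a (Fract p q) = Fract (pcompose p [:a, 1:]) (pcompose q [:a, 1:])"
proof -
  have "pcompose q [:a, 1:] \<noteq> 0"
    using assms by (simp add: pcompose_eq_0_iff)
  then show ?thesis
    using assms shift_fr.abs_eq[of "(p, q)" a] by (simp add: Fract.abs_eq eq_onp_def)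
qed

lemma shift_fr_0 [simp]: "shift_fr a 0 = 0"
  by (simp add: Zero_fract_def shift_fr_Fract pcompose_1)

lemma shift_fr_eq_0_iff [simp]: "shift_fr a x = 0 \<longleftrightarrow> x = 0"
  by (cases x rule: Fract_cases_nonzero)
     (simp_all add: shift_fr_Fract Fract_eq_0_iff pcompose_eq_0_iff)

lemma val_shift_fr: "val t (shift_fr a x) = val (t + a) x"
  by (cases x rule: Fract_cases_nonzero)
     (simp_all add: shift_fr_Fract val_Fract pcompose_eq_0_iff order_pcompose_shift)

lemma poly_fr_0 [simp]: "poly_fr 0 = 0"
  by (simp add: poly_fr_def Zero_fract_def)

lemma poly_fr_1 [simp]: "poly_fr 1 = 1"
  by (simp add: poly_fr_def One_fract_def)

lemma poly_fr_eq_0_iff [simp]: "poly_fr p = 0 \<longleftrightarrow> p = 0"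
  by (simp add: poly_fr_def Fract_eq_0_iff)

lemma poly_fr_add: "poly_fr (p + q) = poly_fr p + poly_fr q"
  and poly_fr_diff: "poly_fr (p - q) = poly_fr p - poly_fr q"
  and poly_fr_minus: "poly_fr (- p) = - poly_fr p"
  and poly_fr_mult: "poly_fr (p * q) = poly_fr p * poly_fr q"
  by (simp_all add: poly_fr_def)

lemma poly_fr_power: "poly_fr (p ^ n) = poly_fr p ^ n"
  by (induction n) (simp_all add: poly_fr_mult)

lemma poly_fr_sum: "poly_fr (sum f S) = (\<Sum>s\<in>S. poly_fr (f s))"
  by (induction S rule: infinite_finite_induct) (simp_all add: poly_fr_add)

lemma cst_eq_poly_fr: "cst c = poly_fr [:c:]"
  by (simp add: poly_fr_def cst_def)

lemma cst_0 [simp]: "cst 0 = 0"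
  by (simp add: cst_def Zero_fract_def)

lemma cst_1 [simp]: "cst 1 = 1"
  by (simp add: cst_def One_fract_def one_pCons)

lemma poly_fr_pCons: "poly_fr (pCons a p) = cst a + hvar * poly_fr p"
  by (simp add: poly_fr_def cst_def hvar_def eq_fract)

lemma hvar_minus_cst_eq_poly_fr: "hvar - cst s = poly_fr [:-s, 1:]"
  by (simp add: hvar_def cst_def poly_fr_def)

lemma cst_eq_0_iff [simp]: "cst c = 0 \<longleftrightarrow> c = 0"
  by (simp add: cst_eq_poly_fr)

lemma hvar_minus_cst_neq_0 [simp]: "hvar - cst s \<noteq> 0"
  by (simp add: hvar_minus_cst_eq_poly_fr)

lemma hvar_neq_cst [simp]: "hvar \<noteq> cst s"
  using hvar_minus_cst_neq_0 by simp

lemma hvar_neq_0 [simp]: "hvar \<noteq> 0"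
  using hvar_neq_cst[of 0] by simp

lemma val_poly_fr: "p \<noteq> 0 \<Longrightarrow> val t (poly_fr p) = int (order t p)"
  by (simp add: poly_fr_def val_Fract)

lemma val_cst: "val t (cst c) = 0"
  by (cases "c = 0") (simp_all add: cst_eq_poly_fr val_poly_fr order_0I)

lemma val_hvar_minus_cst: "val t (hvar - cst s) = of_bool (t = s)"
  by (simp add: hvar_minus_cst_eq_poly_fr val_poly_fr order_power_n_n[of s 1, simplified] order_0I)

lemma val_prod_linear_factors:
  assumes "finite F" "\<And>t. t \<notin> F \<Longrightarrow> k t = 0"
  shows "val t (\<Prod>s\<in>F. (hvar - cst s) powi k s) = k t"
proof -
  have "val t (\<Prod>s\<in>F. (hvar - cst s) powi k s) = (\<Sum>s\<in>F. k s * of_bool (t = s))"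
    using assms(1) by (subst val_prod) (simp_all add: val_power_int val_hvar_minus_cst)
  also have "\<dots> = (\<Sum>s\<in>F. if s = t then k s else 0)"
    by (intro sum.cong) auto
  also have "\<dots> = k t"
    using assms by (simp add: sum.delta)
  finally show ?thesis .
qed

lemma poly_ideal_min_degree_divides:
  fixes I :: "'a::field poly set"
  assumes add: "\<And>p q. p \<in> I \<Longrightarrow> q \<in> I \<Longrightarrow> p + q \<in> I"
    and mult: "\<And>p q. p \<in> I \<Longrightarrow> q * p \<in> I"
    and "p1 \<in> I" "p1 \<noteq> 0"
  obtains g where "g \<in> I" "g \<noteq> 0" "\<And>p. p \<in> I \<Longrightarrow> g dvd p"
proof -
  obtain g where g: "g \<in> I - {0}" and min: "\<And>p. p \<in> I - {0} \<Longrightarrow> degree g \<le> degree p"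
    using ex_has_least_nat[of "\<lambda>p. p \<in> I - {0}" p1 degree] assms(3,4) by blast
  have "g dvd p" if "p \<in> I" for p
  proof (rule ccontr)
    assume "\<not> g dvd p"
    then have r: "p mod g \<noteq> 0"
      by (simp add: mod_eq_0_iff_dvd)
    have "p + (- (p div g)) * g \<in> I"
      using g that by (blast intro: add mult)
    moreover have "p + (- (p div g)) * g = p mod g"
      by (metis minus_div_mult_eq_mod diff_conv_add_uminus mult_minus_left)
    ultimately have "p mod g \<in> I"
      by simp
    then have "degree g \<le> degree (p mod g)"
      using min r by blast
    moreover have "degree (p mod g) < degree g"
      using g r by (intro degree_mod_less') auto
    ultimately show False
      by simp
  qed
  then show thesis
    using g that by blast
qed

lemma poly_ideal_without_common_zero:
  fixes I :: "complex poly set"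
  assumes add: "\<And>p q. p \<in> I \<Longrightarrow> q \<in> I \<Longrightarrow> p + q \<in> I"
    and mult: "\<And>p q. p \<in> I \<Longrightarrow> q * p \<in> I"
    and zero_free: "\<And>t. \<exists>p\<in>I. poly p t \<noteq> 0"
  shows "1 \<in> I"
proof -
  obtain p1 where "p1 \<in> I" "poly p1 0 \<noteq> 0"
    using zero_free by blast
  then obtain g where g: "g \<in> I" "g \<noteq> 0" and dvd: "\<And>p. p \<in> I \<Longrightarrow> g dvd p"
    using poly_ideal_min_degree_divides[OF add mult] by (metis poly_0)
  have "poly g t \<noteq> 0" for t
  proof
    assume "poly g t = 0"
    moreover obtain p where "p \<in> I" "poly p t \<noteq> 0"
      using zero_free by blast
    ultimately show False
      using dvd by (metis dvdE mult_eq_0_iff poly_mult)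
  qed
  then have "degree g = 0"
    using fundamental_theorem_of_algebra constant_degree by blast
  then have "g dvd 1"
    using g is_unit_iff_degree by blast
  then obtain k where "1 = g * k"
    by (elim dvdE)
  then show ?thesis
    using mult[OF g(1), of k] by (simp add: mult.commute)
qed

lemma exists_local_multiple:
  assumes "x \<noteq> 0" "y \<noteq> 0" "val t y \<le> val t x"
  obtains p q where "poly_fr p * x = poly_fr q * y" "poly p t \<noteq> 0"
proof -
  obtain a b where xy: "x / y = Fract a b" "a \<noteq> 0" "b \<noteq> 0"
    using assms(1,2) by (metis Fract_cases_nonzero divide_eq_0_iff)
  define k where "k = order t b"
  have "0 \<le> val t (x / y)"
    using assms by (simp add: val_divide)
  then have "k \<le> order t a"
    using xy by (simp add: k_def val_Fract)
  then obtain a' where a: "a = [:-t, 1:] ^ k * a'"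
    using xy(2) by (metis dvdE order_divides)
  obtain b' where b: "b = [:-t, 1:] ^ k * b'" and "\<not> [:-t, 1:] dvd b'"
    using order_decomp[OF xy(3)] unfolding k_def by blast
  then have "poly b' t \<noteq> 0"
    by (simp add: poly_eq_0_iff_dvd)
  have "x = Fract a' b' * y"
    using xy assms(2) by (simp add: a b mult_fract_cancel divide_eq_eq)
  moreover have "poly_fr b' * Fract a' b' = poly_fr a'"
    using b xy(3) by (simp add: poly_fr_def eq_fract)
  ultimately have "poly_fr b' * x = poly_fr a' * y"
    by (simp flip: mult.assoc)
  then show thesis
    using \<open>poly b' t \<noteq> 0\<close> by (rule that)
qed

lemma local_global_membership:
  assumes add: "\<And>a b. a \<in> M \<Longrightarrow> b \<in> M \<Longrightarrow> a + b \<in> M"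
    and mult: "\<And>p a. a \<in> M \<Longrightarrow> poly_fr p * a \<in> M"
    and local: "\<And>t. \<exists>y\<in>M. y \<noteq> 0 \<and> val t y \<le> val t x"
    and "x \<noteq> 0"
  shows "x \<in> M"
proof -
  define I where "I = {p. poly_fr p * x \<in> M}"
  have "1 \<in> I"
  proof (rule poly_ideal_without_common_zero)
    show "p + q \<in> I" if "p \<in> I" "q \<in> I" for p q
      using add that by (simp add: I_def poly_fr_add distrib_right)
    show "q * p \<in> I" if "p \<in> I" for p q
      using mult that by (simp add: I_def poly_fr_mult mult.assoc)
    show "\<exists>p\<in>I. poly p t \<noteq> 0" for t
    proof -
      obtain y where y: "y \<in> M" "y \<noteq> 0" "val t y \<le> val t x"
        using local by blast
      obtain p q where pq: "poly_fr p * x = poly_fr q * y" "poly p t \<noteq> 0"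
        using exists_local_multiple[OF \<open>x \<noteq> 0\<close> y(2,3)] .
      have "p \<in> I"
        using pq(1) mult[OF y(1), of q] by (simp add: I_def)
      with pq(2) show ?thesis
        by blast
    qed
  qed
  then show ?thesis
    by (simp add: I_def)
qed

lemma range_poly_fr_add:
  assumes "a \<in> range poly_fr" "b \<in> range poly_fr"
  shows "a + b \<in> range poly_fr"
proof -
  obtain q r where "a = poly_fr q" "b = poly_fr r"
    using assms by (elim rangeE)
  then show ?thesis
    using rangeI[of poly_fr "q + r"] by (simp add: poly_fr_add)
qed

lemma range_poly_fr_mult:
  assumes "a \<in> range poly_fr"
  shows "poly_fr p * a \<in> range poly_fr"
proof -
  obtain q where "a = poly_fr q"
    using assms by (rule rangeE)
  then show ?thesis
    using rangeI[of poly_fr "p * q"] by (simp add: poly_fr_mult)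
qed

lemma in_range_poly_fr_if_val_nonneg:
  assumes "\<And>t. 0 \<le> val t x"
  shows "x \<in> range poly_fr"
proof (cases "x = 0")
  case True
  then show ?thesis
    using rangeI[of poly_fr 0] by simp
next
  case False
  have one: "1 \<in> range poly_fr"
    using rangeI[of poly_fr 1] by simp
  show ?thesis
  proof (rule local_global_membership)
    show "\<exists>y\<in>range poly_fr. y \<noteq> 0 \<and> val t y \<le> val t x" for t
      using assms one by (intro bexI[of _ 1]) simp_all
  qed (fact range_poly_fr_add range_poly_fr_mult False)+
qed

lemma finite_common_denominator:
  "finite T \<Longrightarrow> \<exists>d. d \<noteq> 0 \<and> (\<forall>x\<in>T. \<exists>q. x * poly_fr d = poly_fr q)"
proof (induction T rule: finite_induct)
  case empty
  show ?case
    by (intro exI[of _ 1]) simp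
next
  case (insert x T)
  then obtain d where d: "d \<noteq> 0" "\<forall>s\<in>T. \<exists>q. s * poly_fr d = poly_fr q"
    by blast
  obtain a b where x: "x = Fract a b" "b \<noteq> 0"
    by (cases x)
  have "x * poly_fr (d * b) = poly_fr (a * d)"
    using x by (simp add: poly_fr_def eq_fract)
  moreover have "\<exists>q. s * poly_fr (d * b) = poly_fr q" if s: "s \<in> T" for s
  proof -
    obtain q where "s * poly_fr d = poly_fr q"
      using d(2) s by blast
    then have "s * poly_fr (d * b) = poly_fr (q * b)"
      by (simp add: poly_fr_mult flip: mult.assoc)
    then show ?thesis ..
  qed
  ultimately have "\<forall>s\<in>insert x T. \<exists>q. s * poly_fr (d * b) = poly_fr q"
    by blast
  then show ?case
    using d(1) x(2) by (intro exI[of _ "d * b"]) simp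
qed

definition val_space :: "(complex \<Rightarrow> int) \<Rightarrow> ratfun set" where
  "val_space k = {x. x = 0 \<or> (\<forall>t. k t \<le> val t x)}"

lemma val_space_add:
  assumes "a \<in> val_space k" "b \<in> val_space k"
  shows "a + b \<in> val_space k"
proof (cases "a = 0 \<or> b = 0 \<or> a + b = 0")
  case False
  have "k t \<le> val t (a + b)" for t
  proof -
    have "k t \<le> val t a" "k t \<le> val t b"
      using assms False by (auto simp: val_space_def)
    then show ?thesis
      using val_add_ge_min[of a b t] False by linarith
  qed
  then show ?thesis
    by (simp add: val_space_def)
qed (use assms in \<open>auto simp: val_space_def\<close>)

lemma val_space_mult:
  assumes "\<And>t. 0 \<le> val t y" "a \<in> val_space k"
  shows "y * a \<in> val_space k"
proof (cases "y * a = 0")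
  case False
  have "k t \<le> val t (y * a)" for t
  proof -
    have "k t \<le> val t a"
      using assms(2) False by (auto simp: val_space_def)
    then show ?thesis
      using assms(1)[of t] False by (simp add: val_mult)
  qed
  then show ?thesis
    by (simp add: val_space_def)
qed (simp add: val_space_def)

lemma fin_gen_val_space_if_finite:
  assumes fin: "finite {t. k t \<noteq> 0}"
  shows "fin_gen_Ch (val_space k)"
proof -
  define w where "w = (\<Prod>t\<in>{t. k t \<noteq> 0}. (hvar - cst t) powi k t)"
  have val_w: "val t w = k t" for t
    unfolding w_def using fin by (rule val_prod_linear_factors) simp
  have "w \<noteq> 0"
    unfolding w_def using fin by simp
  have "x \<in> val_space k \<longleftrightarrow> (\<exists>q. x = poly_fr q * w)" for x
  proof
    assume x: "x \<in> val_space k"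
    have "x / w \<in> range poly_fr"
    proof (cases "x = 0")
      case False
      then show ?thesis
        using x \<open>w \<noteq> 0\<close> val_w
        by (intro in_range_poly_fr_if_val_nonneg) (simp add: val_space_def val_divide)
    qed (use rangeI[of poly_fr 0] in simp)
    then show "\<exists>q. x = poly_fr q * w"
      using \<open>w \<noteq> 0\<close> by (metis nonzero_eq_divide_eq rangeE)
  next
    assume "\<exists>q. x = poly_fr q * w"
    then obtain q where "x = poly_fr q * w" ..
    then show "x \<in> val_space k"
      using \<open>w \<noteq> 0\<close> val_w by (cases "q = 0") (simp_all add: val_space_def val_mult val_poly_fr)
  qed
  then have "val_space k = {\<Sum>s\<in>{w}. poly_fr (p s) * s | p. True}"
    by auto
  moreover have "w \<in> val_space k"
    using val_w by (simp add: val_space_def)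
  ultimately show ?thesis
    unfolding fin_gen_Ch_def by (intro exI[of _ "{w}"]) simp
qed

lemma fin_gen_common_denominator:
  assumes "fin_gen_Ch M"
  obtains d where "d \<noteq> 0" "\<And>x. x \<in> M \<Longrightarrow> \<exists>q. x * poly_fr d = poly_fr q"
proof -
  obtain S where S: "finite S" "M = {\<Sum>s\<in>S. poly_fr (p s) * s | p. True}"
    using assms unfolding fin_gen_Ch_def by blast
  obtain d where d: "d \<noteq> 0" "\<forall>s\<in>S. \<exists>q. s * poly_fr d = poly_fr q"
    using finite_common_denominator[OF S(1)] by blast
  then obtain q where q: "\<And>s. s \<in> S \<Longrightarrow> s * poly_fr d = poly_fr (q s)"
    by metis
  have "\<exists>r. x * poly_fr d = poly_fr r" if x: "x \<in> M" for x
  proof -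
    obtain p where "x = (\<Sum>s\<in>S. poly_fr (p s) * s)"
      using x S(2) by blast
    then have "x * poly_fr d = poly_fr (\<Sum>s\<in>S. p s * q s)"
      by (simp add: sum_distrib_right mult.assoc q poly_fr_sum poly_fr_mult)
    then show ?thesis ..
  qed
  with d(1) show thesis
    using that by blast
qed

lemma finite_if_fin_gen_val_space:
  assumes nonpos: "\<And>t. k t \<le> 0" and fg: "fin_gen_Ch (val_space k)"
  shows "finite {t. k t \<noteq> 0}"
proof -
  obtain d where d: "d \<noteq> 0" "\<And>x. x \<in> val_space k \<Longrightarrow> \<exists>q. x * poly_fr d = poly_fr q"
    using fin_gen_common_denominator[OF fg] by blast
  have "poly d t = 0" if "k t \<noteq> 0" for t
  proof -
    have "k t \<le> -1"
      using nonpos[of t] that by presburger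
    then have "inverse (hvar - cst t) \<in> val_space k"
      using nonpos by (simp add: val_space_def val_inverse val_hvar_minus_cst)
    then obtain q where q: "inverse (hvar - cst t) * poly_fr d = poly_fr q"
      using d(2) by blast
    then have "q \<noteq> 0"
      using d(1) by auto
    have "val t (inverse (hvar - cst t) * poly_fr d) = int (order t d) - 1"
      using d(1) by (simp add: val_mult val_inverse val_hvar_minus_cst val_poly_fr)
    then have "order t d \<noteq> 0"
      using q \<open>q \<noteq> 0\<close> by (simp add: val_poly_fr)
    then show ?thesis
      using d(1) by (simp add: order_root)
  qed
  then have "{t. k t \<noteq> 0} \<subseteq> {t. poly d t = 0}"
    by blast
  then show ?thesis
    using poly_roots_finite[OF d(1)] by (rule finite_subset)
qed

lemma fin_gen_val_space_iff:
  "(\<And>t. k t \<le> 0) \<Longrightarrow> fin_gen_Ch (val_space k) \<longleftrightarrow> finite {t. k t \<noteq> 0}"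
  using fin_gen_val_space_if_finite finite_if_fin_gen_val_space by blast

definition ladder :: "complex \<Rightarrow> complex set" where
  "ladder t = range (\<lambda>n::nat. t + 2 * of_nat n)"

lemma mem_ladder: "s \<in> ladder t \<longleftrightarrow> (\<exists>n::nat. s = t + 2 * of_nat n)"
  by (auto simp: ladder_def)

lemma Re_le_if_mem_ladder: "s \<in> ladder t \<Longrightarrow> Re t \<le> Re s"
  by (auto simp: mem_ladder)

lemma mem_ladder_iff: "s \<in> ladder t \<longleftrightarrow> s = t \<or> s \<in> ladder (t + 2)"
proof -
  have "(\<exists>n::nat. s = t + 2 * of_nat n) \<longleftrightarrow>
      s = t + 2 * of_nat 0 \<or> (\<exists>n::nat. s = t + 2 * of_nat (Suc n))"
    by (metis not0_implies_Suc)
  then show ?thesis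
    by (simp add: mem_ladder algebra_simps)
qed

lemma not_mem_ladder_add_2: "t \<notin> ladder (t + 2)"
  using Re_le_if_mem_ladder[of t "t + 2"] by auto

lemma mem_ladder_add_iff: "s + c \<in> ladder (t + c) \<longleftrightarrow> s \<in> ladder t"
  by (simp add: mem_ladder)

lemma mem_ladder_iff_minus_2: "t \<in> ladder s \<longleftrightarrow> t = s \<or> t - 2 \<in> ladder s"
  using mem_ladder_iff[of t s] mem_ladder_add_iff[of "t - 2" 2 s] by simp

lemma mem_ladder_if_common_base:
  assumes "a \<in> ladder x" "b \<in> ladder x" "Re a \<le> Re b"
  shows "b \<in> ladder a"
proof -
  obtain i :: nat where a: "a = x + 2 * of_nat i"
    using assms(1) by (auto simp: mem_ladder)
  obtain j :: nat where b: "b = x + 2 * of_nat j"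
    using assms(2) by (auto simp: mem_ladder)
  have "i \<le> j"
    using assms(3) by (simp add: a b)
  then have "b = a + 2 * of_nat (j - i)"
    by (simp add: a b of_nat_diff algebra_simps)
  then show ?thesis
    unfolding mem_ladder by blast
qed

lemma mem_ladder_if_common_top:
  assumes "x \<in> ladder a" "x \<in> ladder b" "Re a \<le> Re b"
  shows "b \<in> ladder a"
proof -
  obtain i :: nat where a: "x = a + 2 * of_nat i"
    using assms(1) by (auto simp: mem_ladder)
  obtain j :: nat where b: "x = b + 2 * of_nat j"
    using assms(2) by (auto simp: mem_ladder)
  have "Re a + 2 * real i = Re b + 2 * real j"
    using arg_cong[OF trans[OF a[symmetric] b], of Re] by simp
  then have "j \<le> i"
    using assms(3) by simp
  then have "b = a + 2 * of_nat (i - j)"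
    using trans[OF a[symmetric] b] by (simp add: of_nat_diff algebra_simps)
  then show ?thesis
    unfolding mem_ladder by blast
qed

lemma mem_ladder_add_2_iff: "s \<in> ladder (r + 2) \<longleftrightarrow> (\<exists>n::nat. n > 0 \<and> r = s - 2 * of_nat n)"
proof
  assume "s \<in> ladder (r + 2)"
  then obtain n :: nat where "s = r + 2 + 2 * of_nat n"
    by (auto simp: mem_ladder)
  then have "Suc n > 0 \<and> r = s - 2 * of_nat (Suc n)"
    by (simp add: algebra_simps)
  then show "\<exists>n::nat. n > 0 \<and> r = s - 2 * of_nat n"
    by blast
next
  assume "\<exists>n::nat. n > 0 \<and> r = s - 2 * of_nat n"
  then obtain n :: nat where "r = s - 2 * of_nat (Suc n)"
    by (metis gr0_implies_Suc)
  then have "s = r + 2 + 2 * of_nat n"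
    by (simp add: algebra_simps)
  then show "s \<in> ladder (r + 2)"
    unfolding mem_ladder by blast
qed

lemma mem_ladder_below_iff:
  assumes "s \<in> ladder (t + 2)" "Re t \<le> Re r" "Re r < Re s"
  shows "r \<in> ladder t \<longleftrightarrow> s \<in> ladder (r + 2)"
proof
  assume "r \<in> ladder t"
  moreover have "s \<in> ladder t"
    using assms(1) mem_ladder_iff[of s t] by blast
  ultimately have "s \<in> ladder r"
    using assms(3) mem_ladder_if_common_base[of r t s] by simp
  moreover have "s \<noteq> r"
    using assms(3) by auto
  ultimately show "s \<in> ladder (r + 2)"
    using mem_ladder_iff[of s r] by blast
next
  assume "s \<in> ladder (r + 2)"
  then have "r + 2 \<in> ladder (t + 2)"
    using assms(1,2) mem_ladder_if_common_top[of s "t + 2" "r + 2"] by simp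
  then show "r \<in> ladder t"
    by (simp only: mem_ladder_add_iff)
qed

lemma infinite_ladder: "infinite (ladder t)"
proof -
  have "inj (\<lambda>n::nat. t + 2 * of_nat n)"
    by (auto intro: injI)
  then show ?thesis
    unfolding ladder_def by (rule range_inj_infinite)
qed

lemma infinite_ladder_bases: "infinite {t. s \<in> ladder (t + 2)}"
proof -
  have "range (\<lambda>n::nat. s - 2 - 2 * of_nat n) \<subseteq> {t. s \<in> ladder (t + 2)}"
    by (auto simp: mem_ladder)
  moreover have "inj (\<lambda>n::nat. s - 2 - 2 * of_nat n)"
    by (auto intro: injI)
  ultimately show ?thesis
    using range_inj_infinite infinite_super by blast
qed

lemma finite_ladder_bases_above: "finite {t. s \<in> ladder (t + 2) \<and> C \<le> Re t}"
proof -
  have "{t. s \<in> ladder (t + 2) \<and> C \<le> Re t}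
      \<subseteq> (\<lambda>n::nat. s - 2 - 2 * of_nat n) ` {..nat \<lceil>Re s - C\<rceil>}"
  proof
    fix t
    assume t: "t \<in> {t. s \<in> ladder (t + 2) \<and> C \<le> Re t}"
    then obtain n :: nat where n: "s = t + 2 + 2 * of_nat n"
      by (auto simp: mem_ladder)
    then have "real n \<le> Re s - C"
      using t by simp
    then have "n \<le> nat \<lceil>Re s - C\<rceil>"
      by linarith
    moreover have "t = s - 2 - 2 * of_nat n"
      using n by simp
    ultimately show "t \<in> (\<lambda>n::nat. s - 2 - 2 * of_nat n) ` {..nat \<lceil>Re s - C\<rceil>}"
      by blast
  qed
  then show ?thesis
    using finite_subset by blast
qed

lemma eventually_val_eq_0: "inj f \<Longrightarrow> \<forall>\<^sub>F n in sequentially. val (f n) x = 0"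
  using finite_vimageI[OF finite_val_support, of f x]
  by (simp add: eventually_cofinite vimage_def flip: cofinite_eq_sequentially)

lemma eventually_real_gt: "\<forall>\<^sub>F n in sequentially. C < a + 2 * real n"
proof -
  obtain N :: nat where "C - a < real N"
    using reals_Archimedean2 by blast
  then show ?thesis
    by (intro eventually_sequentiallyI[of N]) auto
qed

lemma is_submod_poly_fr_mult:
  assumes "is_submod \<theta> u M" "a \<in> M"
  shows "poly_fr p * a \<in> M"
proof (induction p)
  case 0
  then show ?case
    using assms by (simp add: is_submod_def)
next
  case (pCons c p)
  have "poly_fr (pCons c p) * a = cst c * a + act_h (poly_fr p * a)"
    by (simp add: poly_fr_pCons act_h_def algebra_simps)
  then show ?case
    using assms pCons.IH by (simp add: is_submod_def)
qed

lemma is_submod_act_e_iter: "is_submod \<theta> u M \<Longrightarrow> b \<in> M \<Longrightarrow> (act_e u ^^ n) b \<in> M"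
  by (induction n) (auto simp: is_submod_def)

lemma is_submod_act_f_iter: "is_submod \<theta> u M \<Longrightarrow> b \<in> M \<Longrightarrow> (act_f \<theta> u ^^ n) b \<in> M"
  by (induction n) (auto simp: is_submod_def)

locale Lu_setup =
  fixes \<theta> r1 r2 c :: complex and m :: "complex \<Rightarrow> int" and \<omega> :: real and C\<omega> :: "complex set"
  assumes roots: "\<And>z. \<theta> - (z + 1)^2 = - ((z - r1) * (z - r2))"
    and \<omega>_def: "\<omega> = 3 + max (Re r1) (Re r2)"
    and C\<omega>_def: "C\<omega> = {z. \<omega> \<le> Re z \<and> Re z < \<omega> + 2}"
    and c_nz: "c \<noteq> 0"
    and m_fin: "finite {t. m t \<noteq> 0}"
    and m_supp: "{t. m t \<noteq> 0} \<subseteq> C\<omega>"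
begin

definition supp :: "complex set" where
  "supp = {t. m t \<noteq> 0}"

definition u :: ratfun where
  "u = cst c * (\<Prod>t\<in>supp. (hvar - cst t) powi m t)"

definition roots_in :: "complex set \<Rightarrow> int" where
  "roots_in X = of_bool (r1 \<in> X) + of_bool (r2 \<in> X)"

definition m_below :: "complex \<Rightarrow> int" where
  "m_below t = sum m {s \<in> supp. t \<in> ladder s}"

definition m_above :: "complex \<Rightarrow> int" where
  "m_above t = sum m {s \<in> supp. s \<in> ladder (t + 2)}"

definition ord_bound :: "complex \<Rightarrow> int" where
  "ord_bound t = min (m_below t) (roots_in (ladder t) - m_above t)"

lemma finite_supp: "finite supp"
  using m_fin by (simp add: supp_def)

lemma supp_subset: "supp \<subseteq> C\<omega>"
  using m_supp by (simp add: supp_def)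

lemma m_eq_0: "t \<notin> supp \<Longrightarrow> m t = 0"
  by (simp add: supp_def)

lemma Re_roots: "Re r1 \<le> \<omega> - 3" "Re r2 \<le> \<omega> - 3"
  using \<omega>_def by auto

lemma roots_in_nonneg: "0 \<le> roots_in X"
  by (simp add: roots_in_def)

lemma strip_ladder_unique:
  "s \<in> C\<omega> \<Longrightarrow> s' \<in> C\<omega> \<Longrightarrow> s' \<in> ladder s \<or> s \<in> ladder s' \<Longrightarrow> s' = s"
  by (auto simp: C\<omega>_def mem_ladder)

lemma sum_supp_eq: "sum m {s \<in> supp. s = t} = m t"
proof -
  have "{s \<in> supp. s = t} = (if t \<in> supp then {t} else {})"
    by auto
  then show ?thesis
    by (simp add: m_eq_0)
qed

lemma u_neq_0: "u \<noteq> 0"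
  using c_nz finite_supp by (simp add: u_def)

lemma val_u: "val t u = m t"
proof -
  have "val t (\<Prod>s\<in>supp. (hvar - cst s) powi m s) = m t"
    using finite_supp by (rule val_prod_linear_factors) (simp add: m_eq_0)
  then show ?thesis
    using c_nz finite_supp by (simp add: u_def val_mult val_cst)
qed

lemma theta_minus_sq_eq: "cst \<theta> - (hvar + 1)^2 = - ((hvar - cst r1) * (hvar - cst r2))"
proof -
  have "[:\<theta>:] - [:1, 1:]^2 = - ([:-r1, 1:] * [:-r2, 1:])"
  proof (rule poly_eq_poly_eq_iff[THEN iffD1], rule ext)
    fix z
    show "poly ([:\<theta>:] - [:1, 1:]^2) z = poly (- ([:-r1, 1:] * [:-r2, 1:])) z"
      using roots[of z] by (simp add: algebra_simps power2_eq_square)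
  qed
  moreover have "cst \<theta> - (hvar + 1)^2 = poly_fr ([:\<theta>:] - [:1, 1:]^2)"
    by (simp add: poly_fr_diff poly_fr_power poly_fr_pCons add.commute)
  moreover have "- ((hvar - cst r1) * (hvar - cst r2)) = poly_fr (- ([:-r1, 1:] * [:-r2, 1:]))"
    by (simp only: hvar_minus_cst_eq_poly_fr poly_fr_mult poly_fr_minus)
  ultimately show ?thesis
    by simp
qed

lemma theta_minus_sq_neq_0: "cst \<theta> - (hvar + 1)^2 \<noteq> 0"
  unfolding theta_minus_sq_eq by simp

lemma val_theta_minus_sq: "val t (cst \<theta> - (hvar + 1)^2) = roots_in {t}"
proof -
  have "val t ((hvar - cst r1) * (hvar - cst r2)) = of_bool (t = r1) + of_bool (t = r2)"
    by (simp add: val_mult val_hvar_minus_cst)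
  then show ?thesis
    unfolding theta_minus_sq_eq roots_in_def by (simp add: eq_commute)
qed

lemma act_e_neq_0: "b \<noteq> 0 \<Longrightarrow> act_e u b \<noteq> 0"
  by (simp add: act_e_def sigma_def u_neq_0)

lemma val_act_e: "b \<noteq> 0 \<Longrightarrow> val t (act_e u b) = val (t - 2) b + m t"
  by (simp add: act_e_def sigma_def u_neq_0 val_mult val_shift_fr val_u)

lemma act_f_neq_0: "b \<noteq> 0 \<Longrightarrow> act_f \<theta> u b \<noteq> 0"
  using theta_minus_sq_neq_0 by (simp add: act_f_def sigma_inv_def u_neq_0)

lemma val_act_f: "b \<noteq> 0 \<Longrightarrow> val t (act_f \<theta> u b) = roots_in {t} + val (t + 2) b - m (t + 2)"
  using theta_minus_sq_neq_0
  by (simp add: act_f_def sigma_inv_def u_neq_0 val_mult val_divide val_shift_fr val_u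
      val_theta_minus_sq)

lemma m_below_step: "m_below t = m t + m_below (t - 2)"
proof -
  have "{s \<in> supp. t \<in> ladder s} = {s \<in> supp. s = t} \<union> {s \<in> supp. t - 2 \<in> ladder s}"
    using mem_ladder_iff_minus_2[of t] by auto
  moreover have "{s \<in> supp. s = t} \<inter> {s \<in> supp. t - 2 \<in> ladder s} = {}"
    using not_mem_ladder_add_2[of "t - 2"] by auto
  ultimately show ?thesis
    unfolding m_below_def using finite_supp sum_supp_eq[of t] by (simp add: sum.union_disjoint)
qed

lemma m_above_step: "m_above t = m (t + 2) + m_above (t + 2)"
proof -
  have "{s \<in> supp. s \<in> ladder (t + 2)} = {s \<in> supp. s = t + 2} \<union> {s \<in> supp. s \<in> ladder (t + 2 + 2)}"
    using mem_ladder_iff[of _ "t + 2"] by blast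
  moreover have "{s \<in> supp. s = t + 2} \<inter> {s \<in> supp. s \<in> ladder (t + 2 + 2)} = {}"
    using not_mem_ladder_add_2[of "t + 2"] by auto
  ultimately show ?thesis
    unfolding m_above_def using finite_supp sum_supp_eq[of "t + 2"] by (simp add: sum.union_disjoint)
qed

lemma roots_in_ladder_step: "roots_in (ladder t) = roots_in {t} + roots_in (ladder (t + 2))"
  using mem_ladder_iff[of r1 t] mem_ladder_iff[of r2 t] not_mem_ladder_add_2[of t]
  by (auto simp: roots_in_def)

lemma m_below_eq_0: "Re t < \<omega> \<Longrightarrow> m_below t = 0"
  using supp_subset Re_le_if_mem_ladder by (force simp: m_below_def C\<omega>_def intro: sum.neutral)

lemma m_above_eq_0: "\<omega> \<le> Re t \<Longrightarrow> m_above t = 0"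
  using supp_subset Re_le_if_mem_ladder[of _ "t + 2"]
  by (force simp: m_above_def C\<omega>_def intro: sum.neutral)

lemma roots_in_ladder_eq_0: "\<omega> - 3 < Re t \<Longrightarrow> roots_in (ladder t) = 0"
  using Re_roots Re_le_if_mem_ladder[of r1 t] Re_le_if_mem_ladder[of r2 t]
  by (auto simp: roots_in_def)

lemma ord_bound_nonpos: "ord_bound t \<le> 0"
proof (cases "Re t < \<omega>")
  case True
  then show ?thesis
    by (simp add: ord_bound_def m_below_eq_0)
next
  case False
  then show ?thesis
    by (simp add: ord_bound_def m_above_eq_0 roots_in_ladder_eq_0)
qed

lemma ord_bound_le_act_e: "ord_bound t \<le> ord_bound (t - 2) + m t"
  using m_below_step[of t] m_above_step[of "t - 2"] roots_in_ladder_step[of "t - 2"]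
    roots_in_nonneg[of "{t - 2}"]
  by (simp add: ord_bound_def)

lemma ord_bound_le_act_f: "ord_bound t \<le> roots_in {t} + ord_bound (t + 2) - m (t + 2)"
  using m_below_step[of "t + 2"] m_above_step[of t] roots_in_ladder_step[of t]
    roots_in_nonneg[of "{t}"]
  by (simp add: ord_bound_def)

lemma mem_val_space_ord_bound: "x \<in> val_space ord_bound \<longleftrightarrow> (\<forall>t. ord_bound t \<le> val t x)"
  using ord_bound_nonpos by (auto simp: val_space_def)

lemma act_e_mem_val_space:
  assumes "a \<in> val_space ord_bound"
  shows "act_e u a \<in> val_space ord_bound"
proof (cases "a = 0")
  case False
  have "ord_bound t \<le> val t (act_e u a)" for t
    using assms[unfolded mem_val_space_ord_bound, rule_format, of "t - 2"] ord_bound_le_act_e[of t] False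
    by (simp add: val_act_e)
  then show ?thesis
    by (simp add: mem_val_space_ord_bound)
qed (simp add: act_e_def sigma_def val_space_def)

lemma act_f_mem_val_space:
  assumes "a \<in> val_space ord_bound"
  shows "act_f \<theta> u a \<in> val_space ord_bound"
proof (cases "a = 0")
  case False
  have "ord_bound t \<le> val t (act_f \<theta> u a)" for t
    using assms[unfolded mem_val_space_ord_bound, rule_format, of "t + 2"] ord_bound_le_act_f[of t] False
    by (simp add: val_act_f)
  then show ?thesis
    by (simp add: mem_val_space_ord_bound)
qed (simp add: act_f_def sigma_inv_def val_space_def)

lemma is_submod_val_space: "is_submod \<theta> u (val_space ord_bound)"
proof -
  have hvar: "0 \<le> val t hvar" and cst: "0 \<le> val t (cst k)" for t k
    using val_hvar_minus_cst[of t 0] by (simp_all add: val_cst)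
  show ?thesis
    unfolding is_submod_def act_h_def
  proof (intro conjI ballI allI)
    show "0 \<in> val_space ord_bound"
      by (simp add: val_space_def)
  qed (simp_all add: val_space_add val_space_mult[OF hvar] val_space_mult[OF cst]
      act_e_mem_val_space act_f_mem_val_space)
qed

lemma val_act_e_iter:
  assumes "b \<noteq> 0"
  shows "(act_e u ^^ n) b \<noteq> 0 \<and>
    val t ((act_e u ^^ n) b) = val (t - 2 * of_nat n) b + m_below t - m_below (t - 2 * of_nat n)"
proof (induction n arbitrary: t)
  case (Suc n)
  then have "(act_e u ^^ n) b \<noteq> 0"
    by blast
  moreover have "t - 2 - 2 * of_nat n = t - 2 * of_nat (Suc n)"
    by (simp add: algebra_simps)
  ultimately show ?case
    using Suc.IH[of "t - 2"] m_below_step[of t] by (simp only:) (simp add: act_e_neq_0 val_act_e)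
qed (simp add: assms)

lemma val_act_f_iter:
  assumes "b \<noteq> 0"
  shows "(act_f \<theta> u ^^ n) b \<noteq> 0 \<and>
    val t ((act_f \<theta> u ^^ n) b) = val (t + 2 * of_nat n) b
      + (roots_in (ladder t) - m_above t) - (roots_in (ladder (t + 2 * of_nat n)) - m_above (t + 2 * of_nat n))"
proof (induction n arbitrary: t)
  case (Suc n)
  then have "(act_f \<theta> u ^^ n) b \<noteq> 0"
    by blast
  moreover have "t + 2 + 2 * of_nat n = t + 2 * of_nat (Suc n)"
    by (simp add: algebra_simps)
  ultimately show ?case
    using Suc.IH[of "t + 2"] m_above_step[of t] roots_in_ladder_step[of t]
    by (simp only:) (simp add: act_f_neq_0 val_act_f)
qed (simp add: assms)

lemma exists_act_e_iter_val:
  assumes "b \<noteq> 0"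
  obtains n where "(act_e u ^^ n) b \<noteq> 0" "val t ((act_e u ^^ n) b) = m_below t"
proof -
  have "\<forall>\<^sub>F n in sequentially. val (t - 2 * of_nat n) b = 0"
    by (rule eventually_val_eq_0) (auto intro: injI)
  moreover have "\<forall>\<^sub>F n in sequentially. m_below (t - 2 * of_nat n) = 0"
    using eventually_real_gt[of "Re t - \<omega>" 0] by eventually_elim (simp add: m_below_eq_0)
  ultimately obtain n where "val (t - 2 * of_nat n) b = 0" "m_below (t - 2 * of_nat n) = 0"
    using eventually_happens'[OF sequentially_bot] eventually_conj by blast
  then show thesis
    using that[of n] val_act_e_iter[OF assms, of n t] by simp
qed

lemma exists_act_f_iter_val:
  assumes "b \<noteq> 0"
  obtains n where "(act_f \<theta> u ^^ n) b \<noteq> 0"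
    "val t ((act_f \<theta> u ^^ n) b) = roots_in (ladder t) - m_above t"
proof -
  have "\<forall>\<^sub>F n in sequentially. val (t + 2 * of_nat n) b = 0"
    by (rule eventually_val_eq_0) (auto intro: injI)
  moreover have "\<forall>\<^sub>F n in sequentially.
      roots_in (ladder (t + 2 * of_nat n)) = 0 \<and> m_above (t + 2 * of_nat n) = 0"
    using eventually_real_gt[of \<omega> "Re t"]
    by eventually_elim (simp add: roots_in_ladder_eq_0 m_above_eq_0)
  ultimately obtain n where "val (t + 2 * of_nat n) b = 0"
    "roots_in (ladder (t + 2 * of_nat n)) = 0" "m_above (t + 2 * of_nat n) = 0"
    using eventually_happens'[OF sequentially_bot] eventually_conj by blast
  then show thesis
    using that[of n] val_act_f_iter[OF assms, of n t] by simp
qed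

lemma submod_reaches_ord_bound:
  assumes M: "is_submod \<theta> u M" and b: "b \<in> M" "b \<noteq> 0"
  obtains y where "y \<in> M" "y \<noteq> 0" "val t y \<le> ord_bound t"
proof (cases "m_below t \<le> roots_in (ladder t) - m_above t")
  case True
  obtain n where "(act_e u ^^ n) b \<noteq> 0" "val t ((act_e u ^^ n) b) = m_below t"
    using exists_act_e_iter_val[OF b(2)] .
  then show thesis
    using that[OF is_submod_act_e_iter[OF M b(1)]] True by (simp add: ord_bound_def)
next
  case False
  obtain n where "(act_f \<theta> u ^^ n) b \<noteq> 0"
    "val t ((act_f \<theta> u ^^ n) b) = roots_in (ladder t) - m_above t"
    using exists_act_f_iter_val[OF b(2)] .
  then show thesis
    using that[OF is_submod_act_f_iter[OF M b(1)]] False by (simp add: ord_bound_def)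
qed

lemma val_space_subset_submod:
  assumes M: "is_submod \<theta> u M" and "M \<noteq> {0}"
  shows "val_space ord_bound \<subseteq> M"
proof
  fix x
  assume x: "x \<in> val_space ord_bound"
  obtain b where b: "b \<in> M" "b \<noteq> 0"
    using M \<open>M \<noteq> {0}\<close> by (auto simp: is_submod_def)
  show "x \<in> M"
  proof (cases "x = 0")
    case False
    show ?thesis
    proof (rule local_global_membership)
      show "a + a' \<in> M" if "a \<in> M" "a' \<in> M" for a a'
        using M that by (simp add: is_submod_def)
      show "poly_fr p * a \<in> M" if "a \<in> M" for p a
        using M that by (rule is_submod_poly_fr_mult)
      show "\<exists>y\<in>M. y \<noteq> 0 \<and> val t y \<le> val t x" for t
        using submod_reaches_ord_bound[OF M b, of t] x
        by (metis order_trans mem_val_space_ord_bound)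
    qed fact
  qed (use M in \<open>simp add: is_submod_def\<close>)
qed

lemma L_mod_eq_val_space: "L_mod \<theta> u = val_space ord_bound"
proof -
  have "1 \<in> val_space ord_bound"
    by (simp add: mem_val_space_ord_bound ord_bound_nonpos)
  then have nonzero: "val_space ord_bound \<noteq> {0}"
    by auto
  have "M = val_space ord_bound" if "is_simple_submod \<theta> u M" for M
  proof -
    have "is_submod \<theta> u M" "M \<noteq> {0}"
      and min: "\<And>M'. is_submod \<theta> u M' \<Longrightarrow> M' \<subseteq> M \<Longrightarrow> M' = {0} \<or> M' = M"
      using that by (auto simp: is_simple_submod_def)
    then show ?thesis
      using min[OF is_submod_val_space val_space_subset_submod] nonzero by auto
  qed
  moreover have "is_simple_submod \<theta> u (val_space ord_bound)"
    unfolding is_simple_submod_def using is_submod_val_space val_space_subset_submod nonzero by blast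
  ultimately show ?thesis
    unfolding L_mod_def by (rule the_equality[rotated])
qed

definition mult_bounded :: bool where
  "mult_bounded \<longleftrightarrow> (\<forall>s\<in>C\<omega>. 0 \<le> m s \<and> m s \<le> roots_in {r. s \<in> ladder (r + 2)})"

lemma m_below_eq:
  assumes "s \<in> supp" "t \<in> ladder s"
  shows "m_below t = m s"
proof -
  have "s' = s" if "s' \<in> supp" "t \<in> ladder s'" for s'
  proof (rule strip_ladder_unique)
    show "s' \<in> ladder s \<or> s \<in> ladder s'"
      using assms(2) that(2) mem_ladder_if_common_top[of t s s'] mem_ladder_if_common_top[of t s' s]
      by linarith
  qed (use assms(1) that(1) supp_subset in auto)
  then have "{s' \<in> supp. t \<in> ladder s'} = {s}"
    using assms by blast
  then show ?thesis
    by (simp add: m_below_def)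
qed

lemma m_above_eq:
  assumes "s \<in> supp" "s \<in> ladder (t + 2)"
  shows "m_above t = m s"
proof -
  have "s' = s" if "s' \<in> supp" "s' \<in> ladder (t + 2)" for s'
  proof (rule strip_ladder_unique)
    show "s' \<in> ladder s \<or> s \<in> ladder s'"
      using assms(2) that(2) mem_ladder_if_common_base[of s "t + 2" s']
        mem_ladder_if_common_base[of s' "t + 2" s]
      by linarith
  qed (use assms(1) that(1) supp_subset in auto)
  then have "{s' \<in> supp. s' \<in> ladder (t + 2)} = {s}"
    using assms by blast
  then show ?thesis
    by (simp add: m_above_def)
qed

lemma roots_in_ladder_far_below:
  assumes "s \<in> C\<omega>" "s \<in> ladder (t + 2)" "Re t \<le> min (Re r1) (Re r2)"
  shows "roots_in (ladder t) = roots_in {r. s \<in> ladder (r + 2)}"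
proof -
  have "Re r1 < Re s" "Re r2 < Re s"
    using assms(1) Re_roots by (auto simp: C\<omega>_def)
  then show ?thesis
    using assms(2,3) mem_ladder_below_iff[of s t r1] mem_ladder_below_iff[of s t r2]
    by (simp add: roots_in_def)
qed

lemma finite_ord_bound_support:
  assumes mult_bounded
  shows "finite {t. ord_bound t \<noteq> 0}"
proof -
  define \<rho> where "\<rho> = min (Re r1) (Re r2)"
  have "t \<in> (\<Union>s\<in>supp. {t. s \<in> ladder (t + 2) \<and> \<rho> \<le> Re t})" if "ord_bound t \<noteq> 0" for t
  proof -
    have "0 \<le> m_below t"
      using assms supp_subset unfolding m_below_def mult_bounded_def by (intro sum_nonneg) auto
    then have neg: "roots_in (ladder t) < m_above t"
      using that ord_bound_nonpos[of t] by (simp add: ord_bound_def)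
    then have "m_above t \<noteq> 0"
      using roots_in_nonneg[of "ladder t"] by linarith
    then obtain s where s: "s \<in> supp" "s \<in> ladder (t + 2)"
      unfolding m_above_def by (metis (mono_tags, lifting) mem_Collect_eq sum.neutral)
    have "m s \<le> roots_in {r. s \<in> ladder (r + 2)}"
      using assms s(1) supp_subset by (auto simp: mult_bounded_def)
    have "\<rho> \<le> Re t"
    proof (rule ccontr)
      assume "\<not> \<rho> \<le> Re t"
      then have "roots_in (ladder t) = roots_in {r. s \<in> ladder (r + 2)}"
        using s supp_subset by (intro roots_in_ladder_far_below) (auto simp: \<rho>_def)
      then show False
        using neg \<open>m s \<le> roots_in {r. s \<in> ladder (r + 2)}\<close> m_above_eq[OF s] by simp
    qed
    then show ?thesis
      using s by blast
  qed
  then have "{t. ord_bound t \<noteq> 0} \<subseteq> (\<Union>s\<in>supp. {t. s \<in> ladder (t + 2) \<and> \<rho> \<le> Re t})"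
    by blast
  moreover have "finite (\<Union>s\<in>supp. {t. s \<in> ladder (t + 2) \<and> \<rho> \<le> Re t})"
    using finite_supp finite_ladder_bases_above by blast
  ultimately show ?thesis
    by (rule finite_subset)
qed

lemma infinite_ord_bound_support:
  assumes "\<not> mult_bounded"
  shows "infinite {t. ord_bound t \<noteq> 0}"
proof -
  obtain s where "s \<in> C\<omega>" and s: "m s < 0 \<or> roots_in {r. s \<in> ladder (r + 2)} < m s"
    using assms by (auto simp: mult_bounded_def not_le)
  then have "s \<in> supp"
    using roots_in_nonneg[of "{r. s \<in> ladder (r + 2)}"] by (auto simp: supp_def)
  show ?thesis
  proof (cases "m s < 0")
    case True
    have "ladder s \<subseteq> {t. ord_bound t \<noteq> 0}"
      using True m_below_eq[OF \<open>s \<in> supp\<close>] by (auto simp: ord_bound_def)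
    then show ?thesis
      using infinite_ladder infinite_super by blast
  next
    case False
    define \<rho> where "\<rho> = min (Re r1) (Re r2)"
    have "{t. s \<in> ladder (t + 2)} - {t. s \<in> ladder (t + 2) \<and> \<rho> \<le> Re t} \<subseteq> {t. ord_bound t \<noteq> 0}"
    proof
      fix t
      assume t: "t \<in> {t. s \<in> ladder (t + 2)} - {t. s \<in> ladder (t + 2) \<and> \<rho> \<le> Re t}"
      then have "roots_in (ladder t) = roots_in {r. s \<in> ladder (r + 2)}"
        using \<open>s \<in> C\<omega>\<close> by (intro roots_in_ladder_far_below) (auto simp: \<rho>_def)
      then show "t \<in> {t. ord_bound t \<noteq> 0}"
        using s False t m_above_eq[OF \<open>s \<in> supp\<close>] by (auto simp: ord_bound_def)
    qed
    moreover have "infinite ({t. s \<in> ladder (t + 2)} - {t. s \<in> ladder (t + 2) \<and> \<rho> \<le> Re t})"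
      by (rule Diff_infinite_finite[OF finite_ladder_bases_above infinite_ladder_bases])
    ultimately show ?thesis
      using infinite_super by blast
  qed
qed

lemma roots_in_eq_card: "roots_in {r. P r} = int (card {j \<in> {1::nat, 2}. P (if j = 1 then r1 else r2)})"
proof -
  have "{j \<in> {1::nat, 2}. P (if j = 1 then r1 else r2)}
      = (if P r1 then {1} else {}) \<union> (if P r2 then {2} else {})"
    by auto
  then show ?thesis
    by (simp add: roots_in_def)
qed

end

theorem corollary13:
  fixes \<theta> r1 r2 c :: complex and m :: "complex \<Rightarrow> int" and \<omega> :: real and C\<omega> :: "complex set"
  assumes roots: "\<And>z. \<theta> - (z + 1)^2 = - ((z - r1) * (z - r2))"
    and \<omega>_def: "\<omega> = 3 + max (Re r1) (Re r2)"
    and C\<omega>_def: "C\<omega> = {z. \<omega> \<le> Re z \<and> Re z < \<omega> + 2}"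
    and c_nz: "c \<noteq> 0"
    and m_fin: "finite {t. m t \<noteq> 0}"
    and m_supp: "{t. m t \<noteq> 0} \<subseteq> C\<omega>"
  shows "fin_gen_Ch (L_mod \<theta> (cst c * (\<Prod>t\<in>{t. m t \<noteq> 0}. (hvar - cst t) powi m t)))
     \<longleftrightarrow> (\<forall>s\<in>C\<omega>. 0 \<le> m s \<and>
            m s \<le> int (card {j \<in> {1::nat, 2}.
                       \<exists>n::nat. n > 0 \<and> (if j = 1 then r1 else r2) = s - 2 * of_nat n}))"
proof -
  interpret Lu_setup \<theta> r1 r2 c m \<omega> C\<omega>
    using assms by unfold_locales
  have "fin_gen_Ch (L_mod \<theta> u) \<longleftrightarrow> finite {t. ord_bound t \<noteq> 0}"
    by (simp add: L_mod_eq_val_space fin_gen_val_space_iff ord_bound_nonpos)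
  also have "\<dots> \<longleftrightarrow> mult_bounded"
    using finite_ord_bound_support infinite_ord_bound_support by blast
  also have "\<dots> \<longleftrightarrow> (\<forall>s\<in>C\<omega>. 0 \<le> m s \<and>
            m s \<le> int (card {j \<in> {1::nat, 2}.
                       \<exists>n::nat. n > 0 \<and> (if j = 1 then r1 else r2) = s - 2 * of_nat n}))"
    by (simp add: mult_bounded_def roots_in_eq_card mem_ladder_add_2_iff)
  finally show ?thesis
    unfolding u_def supp_def .
qed

end
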